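(* Let $l\ge 1$ be an integer and let $A$ be the Hankel operator on $L^2(\mathbb{R}_+)$, $(Af)(x)=\int_0^\infty a(x+y)f(y)\,dy$, with kernel $$a(x)=e^{-x/2}L^{1}_{l-1}(x),\qquad x>0 .$$ Then $A$ has rank $l$. Its non-zero eigenvalues are $\lambda_n=(-1)^{n-l}$, $n=1,\dots,l$, and the eigenfunction corresponding to $\lambda_n$ is $$\psi_n(x)=e^{-x/2}x^{p-1/2}L^{2p}_{n-1}(x),\qquad p=l+\tfrac12-n .$$
   Context: $\mathbb{R}_+=(0,\infty)$. $L^{\alpha}_m$ denotes the generalized Laguerre polynomial of degree $m$ and parameter $\alpha$ (with leading coefficient $(-1)^m/m!$). *)

theory Defs
  imports "HOL-Analysis.Analysis"
begin

definition laguerre :: "real \<Rightarrow> nat \<Rightarrow> real \<Rightarrow> real" where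
  "laguerre \<alpha> m x = (\<Sum>k\<le>m. (-1)^k * ((of_nat m + \<alpha>) gchoose (m - k)) * x^k / fact k)"

text \<open>Membership in L^2(R_+): a Borel measurable real function whose square is
  Lebesgue integrable on (0,infinity). Only values on (0,infinity) matter.\<close>
definition L2pos :: "(real \<Rightarrow> real) \<Rightarrow> bool" where
  "L2pos f \<longleftrightarrow> f \<in> borel_measurable lborel \<and> set_integrable lborel {0<..} (\<lambda>x. (f x)^2)"

text \<open>Equality almost everywhere on R_+ (equality as elements of L^2(R_+)).\<close>
definition ae_eq_pos :: "(real \<Rightarrow> real) \<Rightarrow> (real \<Rightarrow> real) \<Rightarrow> bool" where
  "ae_eq_pos f g \<longleftrightarrow> (AE x in lborel. x > 0 \<longrightarrow> f x = g x)"

definition hankel_op :: "(real \<Rightarrow> real) \<Rightarrow> (real \<Rightarrow> real) \<Rightarrow> real \<Rightarrow> real" where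
  "hankel_op a f x = (LINT y:{0<..}|lborel. a (x + y) * f y)"

definition hankel_eigenvalue :: "(real \<Rightarrow> real) \<Rightarrow> real \<Rightarrow> bool" where
  "hankel_eigenvalue a \<mu> \<longleftrightarrow>
     (\<exists>f. L2pos f \<and> \<not> ae_eq_pos f (\<lambda>_. 0) \<and> ae_eq_pos (hankel_op a f) (\<lambda>x. \<mu> * f x))"

definition hankel_eigenfunction :: "(real \<Rightarrow> real) \<Rightarrow> real \<Rightarrow> (real \<Rightarrow> real) \<Rightarrow> bool" where
  "hankel_eigenfunction a \<mu> f \<longleftrightarrow>
     L2pos f \<and> \<not> ae_eq_pos f (\<lambda>_. 0) \<and> ae_eq_pos (hankel_op a f) (\<lambda>x. \<mu> * f x)"

definition ae_lin_indep :: "nat \<Rightarrow> (nat \<Rightarrow> real \<Rightarrow> real) \<Rightarrow> bool" where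
  "ae_lin_indep l g \<longleftrightarrow>
     (\<forall>c. ae_eq_pos (\<lambda>x. \<Sum>i<l. c i * g i x) (\<lambda>_. 0) \<longrightarrow> (\<forall>i<l. c i = 0))"

definition hankel_rank :: "(real \<Rightarrow> real) \<Rightarrow> nat \<Rightarrow> bool" where
  "hankel_rank a l \<longleftrightarrow>
     (\<exists>g. (\<forall>i<l. \<exists>f. L2pos f \<and> ae_eq_pos (g i) (hankel_op a f)) \<and> ae_lin_indep l g \<and>
          (\<forall>f. L2pos f \<longrightarrow> (\<exists>c. ae_eq_pos (hankel_op a f) (\<lambda>x. \<Sum>i<l. c i * g i x))))"

end

theory Submission
  imports Defs "HOL-Probability.Distributions"
begin

text \<open>
  Write \<open>N = l - 1\<close>. The kernel is \<open>a(x + y) = e^{-x/2} e^{-y/2} P(x + y)\<close> with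
  \<open>P = L^1_N\<close> a polynomial of degree \<open>N\<close>; expanding \<open>P(x + y)\<close> binomially shows that
  \<open>A f = e^{-x/2} Q(x)\<close>, where \<open>Q\<close> has degree at most \<open>N\<close> and its coefficients are
  the moments \<open>\<integral> e^{-y/2} y^t f(y) dy\<close>. So the range of \<open>A\<close> lies in the span of the
  \<open>e^{-x/2} x^j\<close>, \<open>j \<le> N\<close>. With \<open>m = l - n\<close> the eigenfunction is
  \<open>\<psi>_n = e^{-x/2} x^m L^{2m+1}_{N-m}\<close>, whose lowest-order term is a non-zero multiple of
  \<open>e^{-x/2} x^m\<close>; hence the \<open>\<psi>_n\<close> form a triangular basis of that span. The moments of
  \<open>\<psi>_n\<close> are Gamma integrals, and two Chu--Vandermonde summations turn \<open>A \<psi>_n\<close> into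
  \<open>(-1)^m \<psi>_n\<close>. An operator that is diagonal in a basis of its own range has that basis's
  size as rank and the diagonal entries as its only non-zero eigenvalues.
\<close>

section \<open>Binomial sums\<close>

lemma gbinomial_negated_nat: "(-1::real)^t * of_nat ((t + q) choose t) = ((- real q - 1) gchoose t)"
proof -
  have "((- real q - 1) gchoose t) = (-1)^t * ((of_nat t - (- real q - 1) - 1) gchoose t)"
    by (rule gbinomial_negated_upper)
  also have "of_nat t - (- real q - 1) - 1 = real (t + q)" by simp
  finally show ?thesis by (simp add: binomial_gbinomial)
qed

lemma alternating_Vandermonde:
  "(\<Sum>t\<le>n. (-1::real)^t * of_nat (B choose (n - t)) * of_nat ((t + q) choose t))
     = (real B - real q - 1) gchoose n"
proof -
  have "(\<Sum>t\<le>n. (-1::real)^t * of_nat (B choose (n - t)) * of_nat ((t + q) choose t))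
      = (\<Sum>t=0..n. ((- real q - 1) gchoose t) * (real B gchoose (n - t)))"
    by (intro sum.cong) (auto simp: gbinomial_negated_nat[symmetric] binomial_gbinomial[symmetric] atLeast0AtMost)
  also have "\<dots> = ((- real q - 1) + real B) gchoose n" by (rule gbinomial_Vandermonde)
  finally show ?thesis by (simp add: algebra_simps)
qed

lemma fact_add_div_fact: "fact (t + q) / fact t = (fact q :: real) * of_nat ((t + q) choose t)"
  by (simp add: binomial_fact field_simps)

lemma sum_alternating_binomial_fact:
  "(\<Sum>t\<le>s. (-1::real)^t * of_nat (B choose (s - t)) * fact (t + p) / fact t)
     = fact p * ((real B - real p - 1) gchoose s)"
proof -
  have "(\<Sum>t\<le>s. (-1::real)^t * of_nat (B choose (s - t)) * fact (t + p) / fact t)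
      = fact p * (\<Sum>t\<le>s. (-1::real)^t * of_nat (B choose (s - t)) * of_nat ((t + p) choose t))"
    unfolding sum_distrib_left
    by (intro sum.cong refl) (simp add: fact_add_div_fact[symmetric] field_simps)
  also have "\<dots> = fact p * ((real B - real p - 1) gchoose s)"
    by (simp only: alternating_Vandermonde)
  finally show ?thesis .
qed

lemma sum_alternating_binomial_choose:
  assumes "s \<le> k" "k \<le> K"
  shows "(\<Sum>i\<le>k. (-1::real)^i * of_nat (K choose (k - i)) * of_nat ((i + m) choose i) * of_nat ((k - i) choose s))
     = of_nat (K choose s) * ((real (K - s) - real m - 1) gchoose (k - s))"
proof -
  have "(\<Sum>i\<le>k. (-1::real)^i * of_nat (K choose (k - i)) * of_nat ((i + m) choose i) * of_nat ((k - i) choose s))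
      = (\<Sum>i\<le>k - s. (-1::real)^i * of_nat (K choose (k - i)) * of_nat ((i + m) choose i) * of_nat ((k - i) choose s))"
    by (rule sum.mono_neutral_right) auto
  also have "\<dots> = (\<Sum>i\<le>k - s. of_nat (K choose s) *
      ((-1::real)^i * of_nat ((K - s) choose ((k - s) - i)) * of_nat ((i + m) choose i)))"
  proof (intro sum.cong refl)
    fix i assume "i \<in> {..k - s}"
    hence "(K choose (k - i)) * ((k - i) choose s) = (K choose s) * ((K - s) choose ((k - s) - i))"
      using assms by (simp add: choose_mult diff_commute add.commute)
    hence "real (K choose (k - i)) * real ((k - i) choose s) = real (K choose s) * real ((K - s) choose ((k - s) - i))"
      by (metis of_nat_mult)
    thus "(-1::real)^i * of_nat (K choose (k - i)) * of_nat ((i + m) choose i) * of_nat ((k - i) choose s)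
       = of_nat (K choose s) * ((-1::real)^i * of_nat ((K - s) choose ((k - s) - i)) * of_nat ((i + m) choose i))"
      by (simp add: algebra_simps)
  qed
  also have "\<dots> = of_nat (K choose s) * ((real (K - s) - real m - 1) gchoose (k - s))"
    by (simp only: sum_distrib_left[symmetric] alternating_Vandermonde)
  finally show ?thesis .
qed

lemma sum_triangle_atMost:
  "(\<Sum>r\<le>(n::nat). \<Sum>j\<le>r. g j (r - j)) = (\<Sum>j\<le>n. \<Sum>t\<le>n - j. (g j t :: 'a::comm_monoid_add))"
proof -
  have "(\<Sum>r\<le>n. \<Sum>j\<le>r. g j (r - j)) = (\<Sum>(i, j)\<in>{(i, j). i + j \<le> n}. g i j)"
    by (rule sum.triangle_reindex_eq[symmetric])
  also have "{(i, j). i + j \<le> n} = Sigma {..n} (\<lambda>i. {..n - i})" by auto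
  also have "(\<Sum>(i, j)\<in>Sigma {..n} (\<lambda>i. {..n - i}). g i j) = (\<Sum>j\<le>n. \<Sum>t\<le>n - j. g j t)"
    by (rule sum.Sigma[symmetric]) auto
  finally show ?thesis .
qed

section \<open>Coefficients of Laguerre polynomials\<close>

text \<open>\<open>laguerre_coeff K m i\<close> is the coefficient of \<open>x^i\<close> in \<open>L^{K-m}_m(x)\<close>.\<close>
definition laguerre_coeff :: "nat \<Rightarrow> nat \<Rightarrow> nat \<Rightarrow> real" where
  "laguerre_coeff K m i = (-1)^i * real (K choose (m - i)) / fact i"

lemma laguerre_of_nat:
  "laguerre (real \<alpha>) m x = (\<Sum>i\<le>m. laguerre_coeff (m + \<alpha>) m i * x^i)"
  unfolding laguerre_def laguerre_coeff_def
  by (intro sum.cong refl) (simp add: binomial_gbinomial)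

lemma laguerre_coeff_0_nonzero: "m \<le> K \<Longrightarrow> laguerre_coeff K m 0 \<noteq> 0"
  by (simp add: laguerre_coeff_def)

lemma laguerre_coeff_mult_fact:
  "laguerre_coeff K k i * fact (m + i) = fact m * ((-1::real)^i * of_nat (K choose (k - i)) * of_nat ((i + m) choose i))"
  using fact_add_div_fact[of i m] by (simp add: laguerre_coeff_def field_simps add.commute)

lemma laguerre_coeff_mult_binomial:
  assumes "j + t \<le> N"
  shows "laguerre_coeff (N + 1) N (j + t) * of_nat ((j + t) choose j)
     = (-1)^j / fact j * ((-1::real)^t * of_nat ((N + 1) choose ((N - j) - t)) / fact t)"
proof -
  have "real ((j + t) choose j) = fact (j + t) / (fact j * fact t)"
    by (simp add: binomial_fact)
  moreover have "N - (j + t) = (N - j) - t" by simp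
  ultimately show ?thesis unfolding laguerre_coeff_def by (simp add: power_add field_simps)
qed

lemma laguerre_coeff_convolution_moments:
  assumes "j \<le> m + k"
  shows "(\<Sum>t\<le>m + k - j. laguerre_coeff (m + k + 1) (m + k) (j + t) * of_nat ((j + t) choose j) *
            (\<Sum>i\<le>k. laguerre_coeff K k i * fact (t + (m + i))))
       = (-1)^j / fact j * (\<Sum>i\<le>k. laguerre_coeff K k i * fact (m + i) * of_nat ((k - i) choose (m + k - j)))"
proof -
  have inner: "(\<Sum>t\<le>m + k - j. (-1::real)^t * of_nat ((m + k + 1) choose ((m + k - j) - t)) * fact (t + (m + i)) / fact t)
      = fact (m + i) * of_nat ((k - i) choose (m + k - j))" if "i \<le> k" for i
  proof -
    have "real (m + k + 1) - real (m + i) - 1 = real (k - i)" using that by simp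
    thus ?thesis by (subst sum_alternating_binomial_fact) (simp only: binomial_gbinomial)
  qed
  have "laguerre_coeff (m + k + 1) (m + k) (j + t) * of_nat ((j + t) choose j) *
          (\<Sum>i\<le>k. laguerre_coeff K k i * fact (t + (m + i)))
      = (\<Sum>i\<le>k. (-1)^j / fact j * (laguerre_coeff K k i *
          ((-1::real)^t * of_nat ((m + k + 1) choose ((m + k - j) - t)) * fact (t + (m + i)) / fact t)))"
    if "t \<le> m + k - j" for t
    using that assms by (subst laguerre_coeff_mult_binomial) (auto simp: sum_distrib_left field_simps)
  hence "(\<Sum>t\<le>m + k - j. laguerre_coeff (m + k + 1) (m + k) (j + t) * of_nat ((j + t) choose j) *
            (\<Sum>i\<le>k. laguerre_coeff K k i * fact (t + (m + i))))
      = (-1)^j / fact j * (\<Sum>i\<le>k. laguerre_coeff K k i *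
         (\<Sum>t\<le>m + k - j. (-1::real)^t * of_nat ((m + k + 1) choose ((m + k - j) - t)) * fact (t + (m + i)) / fact t))"
    by (simp add: sum.swap[of _ "{..k}"] sum_distrib_left)
  also have "\<dots> = (-1)^j / fact j * (\<Sum>i\<le>k. laguerre_coeff K k i * fact (m + i) * of_nat ((k - i) choose (m + k - j)))"
    by (intro arg_cong[where f="\<lambda>s. (-1)^j / fact j * s"] sum.cong refl) (subst inner, auto)
  finally show ?thesis .
qed

lemma laguerre_coeff_convolution:
  assumes "j \<le> m + k"
  shows "(\<Sum>t\<le>m + k - j. laguerre_coeff (m + k + 1) (m + k) (j + t) * of_nat ((j + t) choose j) *
            (\<Sum>i\<le>k. laguerre_coeff (2*m + k + 1) k i * fact (t + (m + i))))
       = (if m \<le> j then (-1)^m * laguerre_coeff (2*m + k + 1) k (j - m) else 0)"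
proof -
  define K where "K = 2*m + k + 1"
  define S where "S = (\<Sum>i\<le>k. (-1::real)^i * of_nat (K choose (k - i)) * of_nat ((i + m) choose i) *
                         of_nat ((k - i) choose (m + k - j)))"
  have "(\<Sum>t\<le>m + k - j. laguerre_coeff (m + k + 1) (m + k) (j + t) * of_nat ((j + t) choose j) *
            (\<Sum>i\<le>k. laguerre_coeff K k i * fact (t + (m + i))))
      = (-1)^j * fact m / fact j * S"
    unfolding laguerre_coeff_convolution_moments[OF assms] S_def laguerre_coeff_mult_fact
    by (simp add: sum_distrib_left mult_ac)
  also have "\<dots> = (if m \<le> j then (-1)^m * laguerre_coeff K k (j - m) else 0)"
  proof (cases "m \<le> j")
    case True
    have "S = of_nat (K choose (m + k - j)) * of_nat (j choose (j - m))"
    proof -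
      have "real (K - (m + k - j)) - real m - 1 = real j" "k - (m + k - j) = j - m"
        using assms True by (simp_all add: K_def)
      thus ?thesis unfolding S_def using assms True
        by (subst sum_alternating_binomial_choose) (simp_all add: K_def binomial_gbinomial)
    qed
    moreover have "real (j choose (j - m)) = fact j / (fact (j - m) * fact m)"
      using True by (simp add: binomial_fact)
    moreover have "(-1::real)^j = (-1)^m * (-1)^(j - m)" "k - (j - m) = m + k - j"
      using True assms by (simp_all add: power_add[symmetric])
    ultimately show ?thesis
      using True by (simp add: laguerre_coeff_def field_simps)
  next
    case False
    hence "(k - i) choose (m + k - j) = 0" for i by simp
    thus ?thesis using False by (simp add: S_def del: binomial_eq_0_iff)
  qed
  finally show ?thesis by (simp add: K_def)
qed

text \<open>The eigenvalue equation for \<open>\<psi>\<close>, coefficientwise, once its moments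
  \<open>\<integral> e^{-y} y^s dy = s!\<close> have been inserted.\<close>
lemma laguerre_hankel_identity:
  "(\<Sum>r\<le>m + k. laguerre_coeff (m + k + 1) (m + k) r * (\<Sum>i\<le>k. laguerre_coeff (2*m + k + 1) k i *
      (\<Sum>j\<le>r. of_nat (r choose j) * x^j * fact ((r - j) + (m + i)))))
   = (-1)^m * (\<Sum>i\<le>k. laguerre_coeff (2*m + k + 1) k i * x^(m + i))"
proof -
  define c where "c = laguerre_coeff (2*m + k + 1) k"
  define g where "g j t = laguerre_coeff (m + k + 1) (m + k) (j + t) * of_nat ((j + t) choose j) * x^j *
            (\<Sum>i\<le>k. c i * fact (t + (m + i)))" for j t
  have "(\<Sum>r\<le>m + k. laguerre_coeff (m + k + 1) (m + k) r * (\<Sum>i\<le>k. c i *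
      (\<Sum>j\<le>r. of_nat (r choose j) * x^j * fact ((r - j) + (m + i)))))
     = (\<Sum>r\<le>m + k. \<Sum>j\<le>r. g j (r - j))"
    unfolding g_def
    by (intro sum.cong refl) (simp add: sum_distrib_left sum_distrib_right sum.swap[of _ "{..k}"] algebra_simps)
  also have "\<dots> = (\<Sum>j\<le>m + k. \<Sum>t\<le>m + k - j. g j t)" by (rule sum_triangle_atMost)
  also have "\<dots> = (\<Sum>j\<le>m + k. x^j * (if m \<le> j then (-1)^m * c (j - m) else 0))"
    unfolding g_def c_def
    by (intro sum.cong refl) (simp add: laguerre_coeff_convolution[symmetric] sum_distrib_left algebra_simps)
  also have "\<dots> = (\<Sum>j\<in>{m..m + k}. x^j * ((-1)^m * c (j - m)))"
    by (rule sum.mono_neutral_cong_right) auto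
  also have "\<dots> = (\<Sum>i\<le>k. x^(m + i) * ((-1)^m * c i))"
    by (rule sum.reindex_bij_witness[of _ "\<lambda>i. m + i" "\<lambda>j. j - m"]) auto
  finally show ?thesis by (simp add: c_def sum_distrib_left algebra_simps)
qed

section \<open>Integrals on the positive half-line\<close>

lemma has_bochner_integral_exp_neg_power:
  "has_bochner_integral lborel (\<lambda>y::real. indicator {0<..} y *\<^sub>R (exp (-y) * y^s)) (fact s)"
proof (rule has_bochner_integral_nn_integral)
  have "(\<integral>\<^sup>+y. ennreal (indicator {0<..} y *\<^sub>R (exp (-y) * y^s)) \<partial>lborel)
      = (\<integral>\<^sup>+y. ennreal (y^s * exp (-y)) * indicator {0..} y \<partial>lborel)"
  proof (rule nn_integral_cong_AE)
    show "AE y in lborel. ennreal (indicator {0<..} y *\<^sub>R (exp (-y) * y^s)) = ennreal (y^s * exp (-y)) * indicator {0..} y"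
      using AE_lborel_singleton[of 0] by eventually_elim (auto simp: indicator_def mult.commute)
  qed
  also have "\<dots> = ennreal (fact s)" using nn_intergal_power_times_exp_Ici[of s] by simp
  finally show "(\<integral>\<^sup>+y. ennreal (indicator {0<..} y *\<^sub>R (exp (-y) * y^s)) \<partial>lborel) = ennreal (fact s)" .
qed (auto simp: indicator_def)

lemma set_integrable_exp_neg_power: "set_integrable lborel {0<..} (\<lambda>y::real. exp (-y) * y^s)"
  using has_bochner_integral_exp_neg_power[of s] unfolding set_integrable_def
  by (auto simp: has_bochner_integral_iff)

lemma set_integral_exp_neg_power: "(LINT y:{0<..}|lborel. exp (-y) * y^s) = (fact s :: real)"
  using has_bochner_integral_exp_neg_power[of s] unfolding set_lebesgue_integral_def
  by (auto simp: has_bochner_integral_iff)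

lemma set_integrable_sum:
  fixes f :: "'i \<Rightarrow> 'a \<Rightarrow> real"
  assumes "\<And>i. i \<in> I \<Longrightarrow> set_integrable M A (f i)"
  shows "set_integrable M A (\<lambda>x. \<Sum>i\<in>I. f i x)"
  using assms unfolding set_integrable_def by (simp add: sum_distrib_left)

lemma set_integral_sum:
  fixes f :: "'i \<Rightarrow> 'a \<Rightarrow> real"
  assumes "\<And>i. i \<in> I \<Longrightarrow> set_integrable M A (f i)"
  shows "(LINT x:A|M. (\<Sum>i\<in>I. f i x)) = (\<Sum>i\<in>I. LINT x:A|M. f i x)"
  using assms unfolding set_integrable_def set_lebesgue_integral_def
  by (simp add: sum_distrib_left integral_sum)

lemma exp_half_mult_exp_half: "exp (-(y::real)/2) * exp (-y/2) = exp (-y)"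
  by (simp add: exp_add[symmetric])

definition exp_moment :: "(real \<Rightarrow> real) \<Rightarrow> nat \<Rightarrow> real" where
  "exp_moment f t = (LINT y:{0<..}|lborel. exp (-y/2) * y^t * f y)"

lemma L2pos_exp_moment_integrable:
  assumes "L2pos f"
  shows "set_integrable lborel {0<..} (\<lambda>y. exp (-y/2) * y^t * f y)"
proof (rule set_integrable_bound)
  have [measurable]: "f \<in> borel_measurable lborel" using assms by (simp add: L2pos_def)
  show "set_integrable lborel {0<..} (\<lambda>y. exp (-y) * y^(2*t) + (f y)^2)"
    using assms unfolding L2pos_def by (intro set_integral_add(1) set_integrable_exp_neg_power) simp
  show "set_borel_measurable lborel {0<..} (\<lambda>y. exp (-y/2) * y^t * f y)"
    unfolding set_borel_measurable_def by measurable
  show "AE y in lborel. y \<in> {0<..} \<longrightarrow> norm (exp (-y/2) * y^t * f y) \<le> norm (exp (-y) * y^(2*t) + (f y)^2)"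
  proof (intro AE_I2 impI)
    fix y :: real
    have "(exp (-y/2))^2 = exp (-y)" by (simp add: power2_eq_square exp_add[symmetric])
    hence sq: "(exp (-y/2) * y^t)^2 = exp (-y) * y^(2*t)"
      by (simp only: power_mult_distrib power_mult[symmetric] mult.commute[of t 2])
    have "\<bar>u * v\<bar> \<le> u^2 + v^2" for u v :: real
      using sum_squares_bound[of "\<bar>u\<bar>" "\<bar>v\<bar>"] by (simp add: abs_mult)
        (use mult_nonneg_nonneg[OF abs_ge_zero abs_ge_zero, of u v] in linarith)
    hence "\<bar>exp (-y/2) * y^t * f y\<bar> \<le> (exp (-y/2) * y^t)^2 + (f y)^2" .
    thus "norm (exp (-y/2) * y^t * f y) \<le> norm (exp (-y) * y^(2*t) + (f y)^2)"
      unfolding sq power_mult by simp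
  qed
qed

lemma AE_pos_imp_infinite:
  assumes "AE x in lborel. (x::real) > 0 \<longrightarrow> P x"
  shows "infinite {x. P x}"
proof
  assume "finite {x. P x}"
  hence "AE x in lborel. \<forall>z\<in>{x. P x}. x \<noteq> z"
    by (subst AE_finite_all) (auto intro: AE_lborel_singleton)
  with assms have "AE x in lborel. x \<notin> {0<..1::real}"
    by eventually_elim auto
  moreover have "{x \<in> space lborel. \<not> x \<notin> {0<..1::real}} = {0<..1}" by auto
  ultimately have "emeasure lborel {0<..1::real} = 0"
    using AE_iff_measurable[of "{0<..1::real}" lborel "\<lambda>x. x \<notin> {0<..1::real}"] by auto
  thus False by simp
qed

section \<open>Hankel operators with kernel \<open>e^{-x/2}\<close> times a polynomial\<close>

lemma exp_poly_kernel_shift: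
  fixes a :: "real \<Rightarrow> real"
  assumes "\<And>x. a x = exp (-x/2) * (\<Sum>r\<le>N. c r * x^r)"
  shows "a (x + y) * f y = (\<Sum>r\<le>N. \<Sum>j\<le>r.
           (exp (-x/2) * c r * of_nat (r choose j) * x^j) * (exp (-y/2) * y^(r - j) * f y))"
proof -
  have "exp (-(x + y)/2) = exp (-x/2) * exp (-y/2)" by (simp add: exp_add[symmetric] field_simps)
  moreover have "(x + y)^r = (\<Sum>j\<le>r. of_nat (r choose j) * x^j * y^(r - j))" for r
    by (simp add: binomial_ring)
  ultimately have shift: "a (x + y) = exp (-x/2) * exp (-y/2) *
      (\<Sum>r\<le>N. c r * (\<Sum>j\<le>r. of_nat (r choose j) * x^j * y^(r - j)))"
    by (simp add: assms)
  show ?thesis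
    unfolding shift sum_distrib_left sum_distrib_right by (intro sum.cong refl) (simp only: mult_ac)
qed

lemma
  assumes a: "\<And>x. a x = exp (-x/2) * (\<Sum>r\<le>N. c r * x^r)" and f: "L2pos f"
  shows set_integrable_exp_poly_kernel: "set_integrable lborel {0<..} (\<lambda>y. a (x + y) * f y)"
    and hankel_op_exp_poly_kernel:
      "hankel_op a f x = exp (-x/2) * (\<Sum>r\<le>N. c r * (\<Sum>j\<le>r. of_nat (r choose j) * x^j * exp_moment f (r - j)))"
proof -
  have int_term: "set_integrable lborel {0<..}
      (\<lambda>y. (exp (-x/2) * c r * of_nat (r choose j) * x^j) * (exp (-y/2) * y^(r - j) * f y))" for r j
    using L2pos_exp_moment_integrable[OF f] by (rule set_integrable_mult_right)
  hence int_row: "set_integrable lborel {0<..} (\<lambda>y. \<Sum>j\<le>r.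
      (exp (-x/2) * c r * of_nat (r choose j) * x^j) * (exp (-y/2) * y^(r - j) * f y))" for r
    by (intro set_integrable_sum)
  show "set_integrable lborel {0<..} (\<lambda>y. a (x + y) * f y)"
    unfolding exp_poly_kernel_shift[OF a] by (intro set_integrable_sum int_row)
  have "hankel_op a f x = (\<Sum>r\<le>N. \<Sum>j\<le>r. (exp (-x/2) * c r * of_nat (r choose j) * x^j) * exp_moment f (r - j))"
    unfolding hankel_op_def exp_poly_kernel_shift[OF a] exp_moment_def
    by (simp only: set_integral_sum int_row int_term set_integral_mult_right)
  thus "hankel_op a f x = exp (-x/2) * (\<Sum>r\<le>N. c r * (\<Sum>j\<le>r. of_nat (r choose j) * x^j * exp_moment f (r - j)))"
    by (simp only: sum_distrib_left mult.assoc)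
qed

lemma L2pos_cmult: "L2pos f \<Longrightarrow> L2pos (\<lambda>x. c * f x)"
  unfolding L2pos_def by (auto simp: power_mult_distrib)

lemma hankel_op_cmult: "hankel_op a (\<lambda>y. c * f y) x = c * hankel_op a f x"
  unfolding hankel_op_def by (simp add: mult.left_commute)

lemma hankel_op_sum:
  assumes "finite I" "\<And>i. i \<in> I \<Longrightarrow> set_integrable lborel {0<..} (\<lambda>y. a (x + y) * g i y)"
  shows "hankel_op a (\<lambda>y. \<Sum>i\<in>I. c i * g i y) x = (\<Sum>i\<in>I. c i * hankel_op a (g i) x)"
proof -
  have "hankel_op a (\<lambda>y. \<Sum>i\<in>I. c i * g i y) x = (LINT y:{0<..}|lborel. (\<Sum>i\<in>I. c i * (a (x + y) * g i y)))"
    unfolding hankel_op_def by (simp add: sum_distrib_left mult_ac)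
  also have "\<dots> = (\<Sum>i\<in>I. c i * hankel_op a (g i) x)"
    using assms(2) by (subst set_integral_sum) (simp_all add: hankel_op_def)
  finally show ?thesis .
qed

lemma hankel_op_cong_AE:
  assumes "ae_eq_pos f g" "(\<lambda>y. a (x + y)) \<in> borel_measurable lborel"
    "f \<in> borel_measurable lborel" "g \<in> borel_measurable lborel"
  shows "hankel_op a f x = hankel_op a g x"
  unfolding hankel_op_def
proof (rule set_lebesgue_integral_cong_AE)
  show "AE y\<in>{0<..} in lborel. a (x + y) * f y = a (x + y) * g y"
    using assms(1) unfolding ae_eq_pos_def by eventually_elim auto
qed (use assms(2-4) in auto)

lemma hankel_op_cong_pos:
  "(\<And>y. y > 0 \<Longrightarrow> f y = g y) \<Longrightarrow> hankel_op a f x = hankel_op a g x"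
  unfolding hankel_op_def by (rule set_lebesgue_integral_cong) auto

lemma hankel_eigenfunction_cong_pos:
  assumes "hankel_eigenfunction a \<mu> f" "g \<in> borel_measurable lborel" "\<And>x. x > 0 \<Longrightarrow> g x = f x"
  shows "hankel_eigenfunction a \<mu> g"
proof -
  have "set_integrable lborel {0<..} (\<lambda>x. (g x)^2)"
    using assms(1) unfolding hankel_eigenfunction_def L2pos_def
    by (subst set_integrable_cong[of lborel lborel "{0<..}" "{0<..}" _ "\<lambda>x. (f x)^2"]) (auto simp: assms(3))
  moreover have "hankel_op a g x = hankel_op a f x" for x
    by (rule hankel_op_cong_pos) (simp add: assms(3))
  hence "ae_eq_pos (hankel_op a g) (\<lambda>x. \<mu> * g x) = ae_eq_pos (hankel_op a f) (\<lambda>x. \<mu> * f x)"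
    unfolding ae_eq_pos_def by (intro AE_cong) (auto simp: assms(3))
  moreover have "ae_eq_pos g (\<lambda>_. 0) = ae_eq_pos f (\<lambda>_. 0)"
    unfolding ae_eq_pos_def by (intro AE_cong) (auto simp: assms(3))
  ultimately show ?thesis
    using assms(1,2) unfolding hankel_eigenfunction_def L2pos_def by simp
qed

section \<open>The Laguerre kernel and its eigenfunctions\<close>

definition laguerre_kernel :: "nat \<Rightarrow> real \<Rightarrow> real" where
  "laguerre_kernel N x = exp (-x/2) * laguerre 1 N x"

text \<open>On \<open>x > 0\<close> the paper's \<open>\<psi>_n\<close> is \<open>laguerre_psi (l - n) (n - 1)\<close>. Using the natural
  power \<open>x^m\<close> instead of \<open>x powr m\<close> makes it a polynomial times \<open>e^{-x/2}\<close> on all of \<open>\<real>\<close>.\<close>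
definition laguerre_psi :: "nat \<Rightarrow> nat \<Rightarrow> real \<Rightarrow> real" where
  "laguerre_psi m k x = exp (-x/2) * x^m * laguerre (real (2*m + 1)) k x"

lemma laguerre_kernel_expand:
  "laguerre_kernel N x = exp (-x/2) * (\<Sum>r\<le>N. laguerre_coeff (N + 1) N r * x^r)"
  using laguerre_of_nat[of 1 N x] by (simp add: laguerre_kernel_def)

lemma laguerre_psi_expand:
  "laguerre_psi m k x = exp (-x/2) * (\<Sum>i\<le>k. laguerre_coeff (2*m + k + 1) k i * x^(m + i))"
  unfolding laguerre_psi_def laguerre_of_nat
  by (simp add: sum_distrib_left power_add algebra_simps)

lemma laguerre_kernel_shift_measurable: "(\<lambda>y. laguerre_kernel N (x + y)) \<in> borel_measurable lborel"
  unfolding laguerre_kernel_expand by measurable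

lemma laguerre_psi_measurable [measurable]: "laguerre_psi m k \<in> borel_measurable lborel"
  unfolding laguerre_psi_expand[abs_def] by measurable

lemma L2pos_laguerre_psi: "L2pos (laguerre_psi m k)"
proof -
  define c where "c = laguerre_coeff (2*m + k + 1) k"
  have "(laguerre_psi m k x)^2 = (\<Sum>i\<le>k. \<Sum>i'\<le>k. (c i * c i') * (exp (-x) * x^(2*m + i + i')))" for x
  proof -
    have "(laguerre_psi m k x)^2 = (exp (-x/2) * exp (-x/2)) * ((\<Sum>i\<le>k. c i * x^(m + i)) * (\<Sum>i'\<le>k. c i' * x^(m + i')))"
      unfolding laguerre_psi_expand c_def power2_eq_square by (simp only: mult_ac)
    also have "\<dots> = (\<Sum>i\<le>k. \<Sum>i'\<le>k. (c i * c i') * (exp (-x) * x^(2*m + i + i')))"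
      unfolding exp_half_mult_exp_half sum_product unfolding sum_distrib_left
      by (intro sum.cong refl) (simp add: power_add mult_2 mult_2_right mult_ac)
    finally show ?thesis .
  qed
  moreover have "set_integrable lborel {0<..}
      (\<lambda>x. \<Sum>i\<le>k. \<Sum>i'\<le>k. (c i * c i') * (exp (-x) * x^(2*m + i + i')))"
    by (intro set_integrable_sum set_integrable_mult_right set_integrable_exp_neg_power)
  ultimately show ?thesis unfolding L2pos_def by simp
qed

lemma exp_moment_laguerre_psi:
  "exp_moment (laguerre_psi m k) t = (\<Sum>i\<le>k. laguerre_coeff (2*m + k + 1) k i * fact (t + (m + i)))"
proof -
  have "exp (-y/2) * y^t * laguerre_psi m k y
      = (\<Sum>i\<le>k. laguerre_coeff (2*m + k + 1) k i * (exp (-y) * y^(t + (m + i))))" for y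
    unfolding laguerre_psi_expand sum_distrib_left exp_half_mult_exp_half[symmetric]
    by (intro sum.cong refl) (simp add: power_add mult_ac)
  thus ?thesis
    unfolding exp_moment_def
    by (simp add: set_integral_sum set_integrable_exp_neg_power set_integral_exp_neg_power)
qed

lemma hankel_op_laguerre_psi:
  "hankel_op (laguerre_kernel (m + k)) (laguerre_psi m k) x = (-1)^m * laguerre_psi m k x"
proof -
  have "hankel_op (laguerre_kernel (m + k)) (laguerre_psi m k) x
      = exp (-x/2) * (\<Sum>r\<le>m + k. laguerre_coeff (m + k + 1) (m + k) r * (\<Sum>i\<le>k. laguerre_coeff (2*m + k + 1) k i *
          (\<Sum>j\<le>r. of_nat (r choose j) * x^j * fact ((r - j) + (m + i)))))"
    unfolding hankel_op_exp_poly_kernel[OF laguerre_kernel_expand L2pos_laguerre_psi] exp_moment_laguerre_psi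
    by (simp add: sum_distrib_left mult_ac sum.swap[of _ "{..k}"])
  also have "\<dots> = (-1)^m * laguerre_psi m k x"
    unfolding laguerre_hankel_identity laguerre_psi_expand by (simp only: mult_ac)
  finally show ?thesis .
qed

section \<open>Range and spectrum\<close>

definition laguerre_span :: "nat \<Rightarrow> (real \<Rightarrow> real) \<Rightarrow> bool" where
  "laguerre_span N h \<longleftrightarrow> (\<exists>c. \<forall>x>0. h x = (\<Sum>m\<le>N. c m * laguerre_psi m (N - m) x))"

lemma laguerre_span_psi: "m \<le> N \<Longrightarrow> laguerre_span N (laguerre_psi m (N - m))"
  unfolding laguerre_span_def
  by (rule exI[of _ "\<lambda>m'. of_bool (m' = m)"]) (simp add: of_bool_def if_distrib[of "\<lambda>c. c * _"] sum.delta cong: if_cong)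

lemma laguerre_span_add:
  "laguerre_span N f \<Longrightarrow> laguerre_span N g \<Longrightarrow> laguerre_span N (\<lambda>x. f x + g x)"
proof -
  assume "laguerre_span N f" "laguerre_span N g"
  then obtain c d where "\<forall>x>0. f x = (\<Sum>m\<le>N. c m * laguerre_psi m (N - m) x)"
      "\<forall>x>0. g x = (\<Sum>m\<le>N. d m * laguerre_psi m (N - m) x)"
    unfolding laguerre_span_def by blast
  thus ?thesis
    unfolding laguerre_span_def by (intro exI[of _ "\<lambda>m. c m + d m"]) (simp add: distrib_right sum.distrib)
qed

lemma laguerre_span_lincomb:
  assumes "finite I" "\<And>i. i \<in> I \<Longrightarrow> laguerre_span N (f i)"
  shows "laguerre_span N (\<lambda>x. \<Sum>i\<in>I. c i * f i x)"
  using assms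
proof (induction I rule: finite_induct)
  case empty
  show ?case unfolding laguerre_span_def by (rule exI[of _ "\<lambda>_. 0"]) simp
next
  case (insert i I)
  obtain d where "\<forall>x>0. f i x = (\<Sum>m\<le>N. d m * laguerre_psi m (N - m) x)"
    using insert.prems unfolding laguerre_span_def by blast
  hence "laguerre_span N (\<lambda>x. c i * f i x)"
    unfolding laguerre_span_def by (intro exI[of _ "\<lambda>m. c i * d m"]) (simp add: sum_distrib_left mult.assoc)
  with insert show ?case by (simp add: laguerre_span_add)
qed

lemma laguerre_span_cong: "laguerre_span N g \<Longrightarrow> (\<And>x. x > 0 \<Longrightarrow> f x = g x) \<Longrightarrow> laguerre_span N f"
  unfolding laguerre_span_def by auto

text \<open>The lowest-order term of \<open>laguerre_psi j (N - j)\<close> is a non-zero multiple of \<open>x^j\<close>,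
  so the monomials can be solved for from the top degree downwards.\<close>
lemma laguerre_span_exp_power: "j \<le> N \<Longrightarrow> laguerre_span N (\<lambda>x. exp (-x/2) * x^j)"
proof (induction "N - j" arbitrary: j rule: less_induct)
  case less
  define c where "c = laguerre_coeff (2*j + (N - j) + 1) (N - j)"
  have c0: "c 0 \<noteq> 0" unfolding c_def by (rule laguerre_coeff_0_nonzero) simp
  define d where "d i = (if i = 0 then 1 / c 0 else - c i / c 0)" for i
  define g where "g i x = (if i = 0 then laguerre_psi j (N - j) x else exp (-x/2) * x^(j + i))" for i x
  have "laguerre_span N (\<lambda>x. \<Sum>i\<le>N - j. d i * g i x)"
  proof (intro laguerre_span_lincomb)
    fix i assume "i \<in> {..N - j}"
    thus "laguerre_span N (g i)"
      unfolding g_def using less by (cases "i = 0") (auto intro: laguerre_span_psi less.hyps)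
  qed simp
  thus ?case
  proof (rule laguerre_span_cong)
    fix x :: real
    have split: "{..N - j} = insert 0 {1..N - j}" by auto
    have "laguerre_psi j (N - j) x = c 0 * (exp (-x/2) * x^j) + (\<Sum>i\<in>{1..N - j}. c i * (exp (-x/2) * x^(j + i)))"
      unfolding laguerre_psi_expand c_def split by (simp add: distrib_left sum_distrib_left mult_ac)
    thus "exp (-x/2) * x^j = (\<Sum>i\<le>N - j. d i * g i x)"
      using c0 unfolding split d_def g_def by (simp add: field_simps sum_divide_distrib[symmetric] sum_negf)
  qed
qed

lemma laguerre_span_hankel_op:
  assumes "L2pos f"
  shows "laguerre_span N (hankel_op (laguerre_kernel N) f)"
proof (rule laguerre_span_cong)
  show "laguerre_span N (\<lambda>x. \<Sum>r\<le>N. laguerre_coeff (N + 1) N r *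
      (\<Sum>j\<le>r. (of_nat (r choose j) * exp_moment f (r - j)) * (exp (-x/2) * x^j)))"
    by (intro laguerre_span_lincomb laguerre_span_exp_power) auto
  show "hankel_op (laguerre_kernel N) f x = (\<Sum>r\<le>N. laguerre_coeff (N + 1) N r *
      (\<Sum>j\<le>r. (of_nat (r choose j) * exp_moment f (r - j)) * (exp (-x/2) * x^j)))" for x
    unfolding hankel_op_exp_poly_kernel[OF laguerre_kernel_expand assms] sum_distrib_left
    by (intro sum.cong refl) (simp only: mult_ac)
qed

lemma laguerre_psi_lin_indep:
  assumes "AE x in lborel. x > 0 \<longrightarrow> (\<Sum>m\<le>N. c m * laguerre_psi m (N - m) x) = 0"
  shows "\<forall>m\<le>N. c m = 0"
proof -
  define b where "b m d = (if m \<le> d then laguerre_coeff (m + N + 1) (N - m) (d - m) else 0)" for m d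
  define coef where "coef d = (\<Sum>m\<le>N. c m * b m d)" for d
  have psi_poly: "laguerre_psi m (N - m) x = exp (-x/2) * (\<Sum>d\<le>N. b m d * x^d)" if "m \<le> N" for m x
  proof -
    have "(\<Sum>i\<le>N - m. laguerre_coeff (m + N + 1) (N - m) i * x^(m + i))
        = (\<Sum>d\<in>{m..N}. laguerre_coeff (m + N + 1) (N - m) (d - m) * x^d)"
      using that by (intro sum.reindex_bij_witness[of _ "\<lambda>d. d - m" "\<lambda>i. m + i"]) auto
    also have "\<dots> = (\<Sum>d\<le>N. b m d * x^d)"
      unfolding b_def by (rule sum.mono_neutral_cong_left) auto
    finally show ?thesis
      using that unfolding laguerre_psi_expand by (simp add: mult_2)
  qed
  have "(\<Sum>m\<le>N. c m * laguerre_psi m (N - m) x) = exp (-x/2) * (\<Sum>d\<le>N. coef d * x^d)" for x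
    unfolding coef_def sum_distrib_left sum_distrib_right
    by (subst sum.swap) (auto intro!: sum.cong simp: psi_poly mult_ac sum_distrib_left)
  hence "AE x in lborel. x > 0 \<longrightarrow> (\<Sum>d\<le>N. coef d * x^d) = 0"
    using assms by simp
  hence "infinite {x. (\<Sum>d\<le>N. coef d * x^d) = 0}" by (rule AE_pos_imp_infinite)
  hence coef0: "coef d = 0" if "d \<le> N" for d
    using polyfun_finite_roots[of coef N] that by auto
  show ?thesis
  proof (intro allI impI)
    fix d assume "d \<le> N"
    thus "c d = 0"
    proof (induction d rule: less_induct)
      case (less d)
      have "coef d = (\<Sum>m\<le>N. if m = d then c d * b d d else 0)"
        unfolding coef_def using less by (intro sum.cong refl) (auto simp: b_def)
      hence "c d * b d d = 0" using coef0[OF less.prems] less.prems by simp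
      moreover have "b d d \<noteq> 0" unfolding b_def by (simp add: laguerre_coeff_0_nonzero)
      ultimately show ?case by simp
    qed
  qed
qed

lemma laguerre_psi_not_ae_zero: "m \<le> N \<Longrightarrow> \<not> ae_eq_pos (laguerre_psi m (N - m)) (\<lambda>_. 0)"
proof
  assume "m \<le> N" "ae_eq_pos (laguerre_psi m (N - m)) (\<lambda>_. 0)"
  hence "AE x in lborel. x > 0 \<longrightarrow> (\<Sum>m'\<le>N. of_bool (m' = m) * laguerre_psi m' (N - m') x) = 0"
    unfolding ae_eq_pos_def by (simp add: of_bool_def if_distrib[of "\<lambda>c. c * _"] sum.delta cong: if_cong)
  from laguerre_psi_lin_indep[OF this] \<open>m \<le> N\<close> show False by auto
qed

lemma hankel_op_laguerre_kernel_psi: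
  "m \<le> N \<Longrightarrow> hankel_op (laguerre_kernel N) (laguerre_psi m (N - m)) x = (-1)^m * laguerre_psi m (N - m) x"
  using hankel_op_laguerre_psi[of m "N - m"] by simp

lemma hankel_eigenfunction_laguerre_psi:
  "m \<le> N \<Longrightarrow> hankel_eigenfunction (laguerre_kernel N) ((-1)^m) (laguerre_psi m (N - m))"
  using laguerre_psi_not_ae_zero[of m N] unfolding hankel_eigenfunction_def
  by (simp add: L2pos_laguerre_psi ae_eq_pos_def hankel_op_laguerre_kernel_psi)

lemma hankel_eigenvalue_laguerre_kernel_cases:
  assumes "\<mu> \<noteq> 0" "hankel_eigenvalue (laguerre_kernel N) \<mu>"
  obtains m where "m \<le> N" "\<mu> = (-1)^m"
proof -
  let ?A = "hankel_op (laguerre_kernel N)"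
  let ?\<psi> = "\<lambda>m. laguerre_psi m (N - m)"
  obtain f where f: "L2pos f" "\<not> ae_eq_pos f (\<lambda>_. 0)" "ae_eq_pos (?A f) (\<lambda>x. \<mu> * f x)"
    using assms(2) unfolding hankel_eigenvalue_def by blast
  obtain d where d: "\<forall>x>0. ?A f x = (\<Sum>m\<le>N. d m * ?\<psi> m x)"
    using laguerre_span_hankel_op[OF f(1)] unfolding laguerre_span_def by blast
  define c where "c m = d m / \<mu>" for m
  define g where "g y = (\<Sum>m\<le>N. c m * ?\<psi> m y)" for y
  have fg: "ae_eq_pos f g"
    using f(3) unfolding ae_eq_pos_def
    by eventually_elim (auto simp: d g_def c_def sum_divide_distrib[symmetric] field_simps assms(1))
  have "?A f x = ?A g x" for x
    using fg f(1) unfolding g_def L2pos_def by (intro hankel_op_cong_AE laguerre_kernel_shift_measurable) auto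
  also have "?A g x = (\<Sum>m\<le>N. c m * (-1)^m * ?\<psi> m x)" for x
    unfolding g_def
    by (subst hankel_op_sum)
      (auto simp: hankel_op_laguerre_kernel_psi mult.assoc
        intro: set_integrable_exp_poly_kernel[OF laguerre_kernel_expand L2pos_laguerre_psi])
  finally have Af: "?A f x = (\<Sum>m\<le>N. c m * (-1)^m * ?\<psi> m x)" for x .
  have "AE x in lborel. x > 0 \<longrightarrow> (\<Sum>m\<le>N. (c m * ((-1)^m - \<mu>)) * ?\<psi> m x) = 0"
    using f(3) fg unfolding ae_eq_pos_def
  proof eventually_elim
    case (elim x)
    have "(\<Sum>m\<le>N. (c m * ((-1)^m - \<mu>)) * ?\<psi> m x) = ?A f x - \<mu> * g x"
      unfolding Af g_def by (simp add: algebra_simps sum_subtractf sum_distrib_left)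
    with elim show ?case by simp
  qed
  hence c_eigen: "\<forall>m\<le>N. c m * ((-1)^m - \<mu>) = 0"
    by (rule laguerre_psi_lin_indep)
  have "\<exists>m\<le>N. c m \<noteq> 0"
  proof (rule ccontr)
    assume "\<not> (\<exists>m\<le>N. c m \<noteq> 0)"
    hence "g = (\<lambda>_. 0)" unfolding g_def by (auto intro!: sum.neutral)
    with fg f(2) show False by simp
  qed
  with c_eigen that show thesis by auto
qed

lemma hankel_rank_laguerre_kernel: "hankel_rank (laguerre_kernel N) (Suc N)"
  unfolding hankel_rank_def
proof (intro exI[of _ "\<lambda>m. laguerre_psi m (N - m)"] conjI allI impI)
  fix m assume "m < Suc N"
  hence "hankel_op (laguerre_kernel N) (\<lambda>y. (-1)^m * laguerre_psi m (N - m) y) x = laguerre_psi m (N - m) x" for x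
    by (simp add: hankel_op_cmult hankel_op_laguerre_kernel_psi)
  thus "\<exists>f. L2pos f \<and> ae_eq_pos (laguerre_psi m (N - m)) (hankel_op (laguerre_kernel N) f)"
    unfolding ae_eq_pos_def by (intro exI[of _ "\<lambda>y. (-1)^m * laguerre_psi m (N - m) y"]) (simp add: L2pos_cmult L2pos_laguerre_psi)
next
  show "ae_lin_indep (Suc N) (\<lambda>m. laguerre_psi m (N - m))"
    unfolding ae_lin_indep_def ae_eq_pos_def lessThan_Suc_atMost
    using laguerre_psi_lin_indep by auto
next
  fix f assume "L2pos f"
  then obtain c where "\<forall>x>0. hankel_op (laguerre_kernel N) f x = (\<Sum>m\<le>N. c m * laguerre_psi m (N - m) x)"
    using laguerre_span_hankel_op unfolding laguerre_span_def by blast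
  thus "\<exists>c. ae_eq_pos (hankel_op (laguerre_kernel N) f) (\<lambda>x. \<Sum>m<Suc N. c m * laguerre_psi m (N - m) x)"
    unfolding ae_eq_pos_def lessThan_Suc_atMost by auto
qed

lemma nonzero_hankel_eigenvalues_laguerre_kernel:
  "{\<mu>. \<mu> \<noteq> 0 \<and> hankel_eigenvalue (laguerre_kernel N) \<mu>} = {(-1)^m | m. m \<le> N}"
proof (intro equalityI subsetI)
  fix \<mu> assume "\<mu> \<in> {\<mu>. \<mu> \<noteq> 0 \<and> hankel_eigenvalue (laguerre_kernel N) \<mu>}"
  thus "\<mu> \<in> {(-1)^m | m. m \<le> N}"
    by (auto elim: hankel_eigenvalue_laguerre_kernel_cases)
next
  fix \<mu> assume "\<mu> \<in> {(-1::real)^m | m. m \<le> N}"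
  thus "\<mu> \<in> {\<mu>. \<mu> \<noteq> 0 \<and> hankel_eigenvalue (laguerre_kernel N) \<mu>}"
    using hankel_eigenfunction_laguerre_psi unfolding hankel_eigenvalue_def hankel_eigenfunction_def by auto
qed

lemma power_int_minus_one_diff: "n \<le> l \<Longrightarrow> (-1::real) powi (int n - int l) = (-1)^(l - n)"
proof -
  assume "n \<le> l"
  hence "(-1::real) powi (int n - int l) = (-1) powi (int (l - n))"
    by (subst power_int_minus_one_diff_commute) (simp add: of_nat_diff)
  thus ?thesis by (simp add: power_int_of_nat)
qed

lemma power_int_minus_one_diff_image:
  assumes l: "l = Suc N"
  shows "{(-1::real) powi (int n - int l) | n. n \<in> {1..l}} = {(-1)^m | m. m \<le> N}"
proof (intro equalityI subsetI)
  fix \<mu> assume "\<mu> \<in> {(-1::real) powi (int n - int l) | n. n \<in> {1..l}}"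
  then obtain n where n: "n \<in> {1..l}" "\<mu> = (-1)^(l - n)" by (auto simp: power_int_minus_one_diff)
  moreover have "l - n \<le> N" using n(1) by (auto simp: l)
  ultimately show "\<mu> \<in> {(-1)^m | m. m \<le> N}" by blast
next
  fix \<mu> assume "\<mu> \<in> {(-1::real)^m | m. m \<le> N}"
  then obtain m where "m \<le> N" "\<mu> = (-1)^m" by blast
  thus "\<mu> \<in> {(-1::real) powi (int n - int l) | n. n \<in> {1..l}}"
    using power_int_minus_one_diff[of "l - m" l] by (intro CollectI exI[of _ "l - m"]) (simp add: l)
qed

theorem proposition5p3:
  fixes l :: nat and a :: "real \<Rightarrow> real" and \<psi> :: "nat \<Rightarrow> real \<Rightarrow> real"
  assumes "l \<ge> 1"
    and "\<And>x. a x = exp (- x / 2) * laguerre 1 (l - 1) x"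
    and "\<And>n x. \<psi> n x = (let p = real l + 1/2 - real n in
            exp (- x / 2) * x powr (p - 1/2) * laguerre (2 * p) (n - 1) x)"
  shows "hankel_rank a l
    \<and> {\<mu>. \<mu> \<noteq> 0 \<and> hankel_eigenvalue a \<mu>} = {(-1::real) powi (int n - int l) | n. n \<in> {1..l}}
    \<and> (\<forall>n\<in>{1..l}. hankel_eigenfunction a ((-1::real) powi (int n - int l)) (\<psi> n))"
proof -
  define N where "N = l - 1"
  have l: "l = Suc N" using assms(1) by (simp add: N_def)
  have a: "a = laguerre_kernel N" by (rule ext) (simp add: assms(2) laguerre_kernel_def N_def)
  have "hankel_eigenfunction a ((-1::real) powi (int n - int l)) (\<psi> n)" if n: "n \<in> {1..l}" for n
  proof (rule hankel_eigenfunction_cong_pos)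
    show "hankel_eigenfunction a ((-1::real) powi (int n - int l)) (laguerre_psi (l - n) (N - (l - n)))"
      using hankel_eigenfunction_laguerre_psi[of "l - n" N] power_int_minus_one_diff[of n l] n
      by (auto simp: a l)
    show "\<psi> n \<in> borel_measurable lborel"
      unfolding assms(3)[abs_def] Let_def laguerre_def by measurable
    have "real l + 1/2 - real n - 1/2 = real (l - n)" "2 * (real l + 1/2 - real n) = real (2 * (l - n) + 1)"
      using n by (auto simp: of_nat_diff)
    moreover have "n - 1 = N - (l - n)" using n by (simp add: N_def)
    ultimately show "\<psi> n x = laguerre_psi (l - n) (N - (l - n)) x" if "x > 0" for x
      unfolding assms(3) Let_def laguerre_psi_def using that by (simp only: powr_realpow)
  qed
  thus ?thesis
    using hankel_rank_laguerre_kernel[of N] nonzero_hankel_eigenvalues_laguerre_kernel[of N]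
      power_int_minus_one_diff_image[OF l]
    by (simp add: a l)
qed

end
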